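(* The set $\mathcal W$ of $n\times n$ matrices is closed under matrix multiplication: if $P,Q\in\mathcal W$ then $PQ\in\mathcal W$.
   Context: Let $\mathcal N=\{1,\ldots,n\}$. A matrix is stochastic if it is entrywise nonnegative with row sums $1$. For stochastic $P$ and $\mathcal A\subseteq\mathcal N$, $F_P(\mathcal A)=\{j:\ p_{ij}>0\text{ for some } i\in\mathcal A\}$. $\mathcal W$ is the set of stochastic $n\times n$ matrices $P$ such that for any disjoint nonempty $\mathcal A,\tilde{\mathcal A}\subseteq\mathcal N$, either $F_P(\mathcal A)\cap F_P(\tilde{\mathcal A})\neq\emptyset$, or $F_P(\mathcal A)\cap F_P(\tilde{\mathcal A})=\emptyset$ and $|F_P(\mathcal A)\cup F_P(\tilde{\mathcal A})|\ge|\mathcal A\cup\tilde{\mathcal A}|$. *)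

theory Defs
  imports "HOL-Analysis.Analysis"
begin

text \<open>Matrices are real n x n matrices indexed by a finite type 'n (so N = UNIV :: 'n set).\<close>

definition stochastic :: "real^'n^'n \<Rightarrow> bool" where
  "stochastic P \<longleftrightarrow> (\<forall>i j. P $ i $ j \<ge> 0) \<and> (\<forall>i. (\<Sum>j\<in>UNIV. P $ i $ j) = 1)"

definition F :: "real^'n^'n \<Rightarrow> 'n set \<Rightarrow> 'n set" where
  "F P A = {j. \<exists>i\<in>A. P $ i $ j > 0}"

definition W_set :: "(real^'n^'n) set" where
  "W_set = {P. stochastic P \<and>
     (\<forall>A B. A \<noteq> {} \<longrightarrow> B \<noteq> {} \<longrightarrow> A \<inter> B = {} \<longrightarrow>
        (F P A \<inter> F P B \<noteq> {} \<or>
         (F P A \<inter> F P B = {} \<and> card (F P A \<union> F P B) \<ge> card (A \<union> B))))}"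

end

theory Submission
  imports Defs
begin

text \<open>The support of a product of nonnegative matrices is the relational composition of the
supports, so F (P ** Q) = F Q \<circ> F P. For stochastic matrices every row has a positive
entry, hence F Q maps overlapping sets to overlapping sets; consequently disjoint images
under F (P ** Q) come from disjoint images under F P, and the cardinality bound
can be applied twice in succession.\<close>

definition nonneg_matrix :: "real^'n^'n \<Rightarrow> bool" where
  "nonneg_matrix P \<longleftrightarrow> (\<forall>i j. P $ i $ j \<ge> 0)"

definition expanding :: "real^'n^'n \<Rightarrow> bool" where
  "expanding P \<longleftrightarrow> (\<forall>A B. A \<noteq> {} \<longrightarrow> B \<noteq> {} \<longrightarrow> A \<inter> B = {} \<longrightarrow>
     F P A \<inter> F P B = {} \<longrightarrow> card (A \<union> B) \<le> card (F P A \<union> F P B))"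

lemma W_set_iff: "P \<in> W_set \<longleftrightarrow> stochastic P \<and> expanding P"
  unfolding W_set_def expanding_def by auto

lemma stochastic_imp_nonneg_matrix: "stochastic P \<Longrightarrow> nonneg_matrix P"
  by (simp add: stochastic_def nonneg_matrix_def)

lemma matrix_matrix_mult_entry: "(P ** Q) $ i $ j = (\<Sum>k\<in>UNIV. P $ i $ k * Q $ k $ j)"
  by (simp add: matrix_matrix_mult_def)

lemma stochastic_matrix_mult:
  fixes P Q :: "real^'n^'n"
  assumes "stochastic P" "stochastic Q"
  shows "stochastic (P ** Q)"
  unfolding stochastic_def
proof (intro conjI allI)
  fix i j
  show "0 \<le> (P ** Q) $ i $ j"
    unfolding matrix_matrix_mult_entry
    using assms by (intro sum_nonneg mult_nonneg_nonneg) (auto simp: stochastic_def)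
next
  fix i
  have "(\<Sum>j\<in>UNIV. (P ** Q) $ i $ j) = (\<Sum>k\<in>UNIV. \<Sum>j\<in>UNIV. P $ i $ k * Q $ k $ j)"
    unfolding matrix_matrix_mult_entry by (rule sum.swap)
  also have "\<dots> = (\<Sum>k\<in>UNIV. P $ i $ k * (\<Sum>j\<in>UNIV. Q $ k $ j))"
    by (simp add: sum_distrib_left)
  also have "\<dots> = 1"
    using assms by (simp add: stochastic_def)
  finally show "(\<Sum>j\<in>UNIV. (P ** Q) $ i $ j) = 1" .
qed

lemma matrix_mult_entry_pos_iff:
  fixes P Q :: "real^'n^'n"
  assumes "nonneg_matrix P" "nonneg_matrix Q"
  shows "(P ** Q) $ i $ j > 0 \<longleftrightarrow> (\<exists>k. P $ i $ k > 0 \<and> Q $ k $ j > 0)"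
proof -
  have nonneg: "\<forall>k\<in>UNIV. 0 \<le> P $ i $ k * Q $ k $ j"
    using assms by (simp add: nonneg_matrix_def)
  then have "(P ** Q) $ i $ j \<noteq> 0 \<longleftrightarrow> (\<exists>k. P $ i $ k * Q $ k $ j \<noteq> 0)"
    unfolding matrix_matrix_mult_entry by (subst sum_nonneg_eq_0_iff) auto
  moreover have "0 \<le> (P ** Q) $ i $ j"
    unfolding matrix_matrix_mult_entry using nonneg by (simp add: sum_nonneg)
  ultimately have "(P ** Q) $ i $ j > 0 \<longleftrightarrow> (\<exists>k. P $ i $ k * Q $ k $ j > 0)"
    using nonneg by (metis UNIV_I order_less_le)
  also have "\<dots> \<longleftrightarrow> (\<exists>k. P $ i $ k > 0 \<and> Q $ k $ j > 0)"
    using assms unfolding nonneg_matrix_def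
    by (metis less_eq_real_def mult_pos_pos zero_less_mult_pos mult_zero_left)
  finally show ?thesis .
qed

lemma F_matrix_mult:
  assumes "nonneg_matrix P" "nonneg_matrix Q"
  shows "F (P ** Q) A = F Q (F P A)"
  using matrix_mult_entry_pos_iff[OF assms] unfolding F_def by auto

lemma stochastic_row_has_pos_entry:
  assumes "stochastic P"
  obtains j where "P $ i $ j > 0"
proof -
  have "(\<Sum>j\<in>UNIV. P $ i $ j) \<noteq> 0"
    using assms by (simp add: stochastic_def)
  then obtain j where "P $ i $ j \<noteq> 0"
    by (meson sum.neutral)
  with assms that show thesis
    by (simp add: stochastic_def order.strict_iff_order)
qed

lemma F_disjoint_imp_disjoint:
  assumes "stochastic P" "F P X \<inter> F P Y = {}"
  shows "X \<inter> Y = {}"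
proof (rule ccontr)
  assume "X \<inter> Y \<noteq> {}"
  then obtain k where "k \<in> X" "k \<in> Y" by blast
  moreover obtain j where "P $ k $ j > 0"
    using stochastic_row_has_pos_entry[OF assms(1)] .
  ultimately have "j \<in> F P X \<inter> F P Y"
    unfolding F_def by blast
  with assms(2) show False by blast
qed

lemma F_nonempty:
  assumes "stochastic P" "A \<noteq> {}"
  shows "F P A \<noteq> {}"
proof -
  obtain i where "i \<in> A"
    using assms(2) by blast
  moreover obtain j where "P $ i $ j > 0"
    using stochastic_row_has_pos_entry[OF assms(1)] .
  ultimately show ?thesis
    unfolding F_def by blast
qed

lemma expanding_matrix_mult:
  fixes P Q :: "real^'n^'n"
  assumes "stochastic P" "expanding P" "stochastic Q" "expanding Q"
  shows "expanding (P ** Q)"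
  unfolding expanding_def
proof (intro allI impI)
  fix A B :: "'n set"
  assume A: "A \<noteq> {}" and B: "B \<noteq> {}" and AB: "A \<inter> B = {}"
    and disj: "F (P ** Q) A \<inter> F (P ** Q) B = {}"
  have FPQ: "F (P ** Q) X = F Q (F P X)" for X
    using assms by (simp add: F_matrix_mult stochastic_imp_nonneg_matrix)
  have disj_Q: "F Q (F P A) \<inter> F Q (F P B) = {}"
    using disj by (simp add: FPQ)
  then have disj_P: "F P A \<inter> F P B = {}"
    using F_disjoint_imp_disjoint[OF assms(3)] by blast
  have "card (A \<union> B) \<le> card (F P A \<union> F P B)"
    using assms(2) A B AB disj_P by (simp add: expanding_def)
  also have "\<dots> \<le> card (F Q (F P A) \<union> F Q (F P B))"
    using assms(4) F_nonempty[OF assms(1)] A B disj_P disj_Q by (simp add: expanding_def)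
  finally show "card (A \<union> B) \<le> card (F (P ** Q) A \<union> F (P ** Q) B)"
    by (simp add: FPQ)
qed

theorem mainTheorem7:
  fixes P Q :: "real^'n^'n"
  assumes "P \<in> W_set" and "Q \<in> W_set"
  shows "P ** Q \<in> W_set"
  using assms stochastic_matrix_mult expanding_matrix_mult by (auto simp: W_set_iff)

end
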